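(* Let $S\subsetneq\mathbb{S}$ (possibly empty) and for $q\in(0,1)$ write $v_i(q)=V(qe^{\theta_i-1})$ for $i\in S$. Define $$F_S(q)=-\log q+\sum_{i\in S}\frac{v_i(q)}{1-v_i(q)}+\frac{1-q-\sum_{i\in S}v_i(q)}{q+\sum_{i\in S}v_i(q)}.$$ Then $F_S$ is strictly decreasing on $(0,\bar q_0(S)]$.
   Context: Sellers $\mathbb{S}=\{1,\dots,n\}$ with product qualities $\theta_i\ge0$. $V:(0,\infty)\to(0,1)$ is defined by $V(x)=$ the unique $v\in(0,1)$ with $v\exp(v/(1-v))=x$. For nonempty $S\subseteq\mathbb{S}$, $\bar q_0(S)\in(0,1)$ is the unique solution of $\sum_{i\in S}V(\bar q_0e^{\theta_i-1})=1-\bar q_0$; $\bar q_0(\emptyset)=1$. (For $j\notin S$, $F_S(\bar q_0(S\cup\{j\}))$ equals the Bertrand equilibrium social welfare when $S\cup\{j\}$ is displayed, and $F_S(\bar q_0(S))$ equals that when $S$ is displayed.) *)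

theory Defs
  imports Complex_Main
begin

definition V :: "real \<Rightarrow> real" where
  "V x = (THE v. 0 < v \<and> v < 1 \<and> v * exp (v / (1 - v)) = x)"

definition qbar0 :: "(nat \<Rightarrow> real) \<Rightarrow> nat set \<Rightarrow> real" where
  "qbar0 \<theta> S = (if S = {} then 1 else
     (THE q. 0 < q \<and> q < 1 \<and> (\<Sum>i\<in>S. V (q * exp (\<theta> i - 1))) = 1 - q))"

definition vq :: "(nat \<Rightarrow> real) \<Rightarrow> nat \<Rightarrow> real \<Rightarrow> real" where
  "vq \<theta> i q = V (q * exp (\<theta> i - 1))"

definition F :: "(nat \<Rightarrow> real) \<Rightarrow> nat set \<Rightarrow> real \<Rightarrow> real" where
  "F \<theta> S q = - ln q + (\<Sum>i\<in>S. vq \<theta> i q / (1 - vq \<theta> i q))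
     + (1 - q - (\<Sum>i\<in>S. vq \<theta> i q)) / (q + (\<Sum>i\<in>S. vq \<theta> i q))"

end

theory Submission
  imports Defs
begin

(*
  Write v_i = V (q e^(theta_i - 1)) and T = q + sum_i v_i.  Differentiating v e^(v/(1-v)) = x
  implicitly gives q v_i' = v_i (1 - w(v_i)) with w(v) = v/(1 - v + v^2), and then
    q F_S'(q) = sum_i w(v_i) (1 + v_i/T^2) - 1 - 1/T.
  On (0, qbar0 S] we have T <= 1.  There each summand is at most (1+T)/(2T) h(v_i/T) with
  h(y) = y(1+y)/(1 - y + y^2), and sum_i h(y_i) < 2 whenever the y_i are positive with sum < 1,
  because h(y) + h(1-y) = 2 and h(y)/y increases on [0, 1/2].  Hence F_S' < 0.
*)

definition Vinv :: "real \<Rightarrow> real" where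
  "Vinv v = v * exp (v / (1 - v))"

lemma strict_mono_on_Vinv: "strict_mono_on {0..<1} Vinv"
proof (rule strict_mono_onI)
  fix a b :: real
  assume "a \<in> {0..<1}" "b \<in> {0..<1}" "a < b"
  then have ab: "0 \<le> a" "a < b" "b < 1" by auto
  then have "exp (a / (1 - a)) \<le> exp (b / (1 - b))" by (simp add: frac_le)
  then have "a * exp (a / (1 - a)) \<le> a * exp (b / (1 - b))" using ab by (simp add: mult_left_mono)
  also have "\<dots> < b * exp (b / (1 - b))" using ab by simp
  finally show "Vinv a < Vinv b" unfolding Vinv_def .
qed

lemma Vinv_has_real_derivative:
  assumes "v < 1"
  shows "(Vinv has_real_derivative exp (v / (1 - v)) * (1 + v / (1 - v)^2)) (at v)"
  unfolding Vinv_def using assms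
  by (auto intro!: derivative_eq_intros simp: field_simps power2_eq_square)

lemma Vinv_attains:
  assumes "0 < x"
  obtains v where "0 < v" "v < 1" "Vinv v = x"
proof -
  define b where "b = (x + 1) / (x + 2)"
  have b: "0 \<le> b" "b < 1" "b / (1 - b) = x + 1"
    using assms by (auto simp: b_def field_simps)
  have "x \<le> b * (1 + b / (1 - b))"
    using b by (simp add: field_simps)
  also have "\<dots> \<le> Vinv b"
    unfolding Vinv_def using b by (intro mult_left_mono exp_ge_add_one_self) auto
  finally have "x \<le> Vinv b" .
  moreover have "Vinv 0 \<le> x" "continuous_on {0..b} Vinv"
    using assms b unfolding Vinv_def by (auto intro!: continuous_intros)
  ultimately obtain v where v: "0 \<le> v" "v \<le> b" "Vinv v = x"
    using IVT'[of Vinv 0 x b] b by auto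
  moreover have "v \<noteq> 0" using v assms by (auto simp: Vinv_def)
  ultimately show thesis using b by (intro that) auto
qed

lemma V_spec:
  assumes "0 < x"
  shows "0 < V x" "V x < 1" "Vinv (V x) = x"
proof -
  have "\<exists>!v. 0 < v \<and> v < 1 \<and> Vinv v = x"
  proof (rule ex_ex1I)
    show "\<exists>v. 0 < v \<and> v < 1 \<and> Vinv v = x"
      using Vinv_attains[OF assms] by metis
    show "u = w" if "0 < u \<and> u < 1 \<and> Vinv u = x" "0 < w \<and> w < 1 \<and> Vinv w = x" for u w
      using that strict_mono_on_imp_inj_on[OF strict_mono_on_Vinv] by (auto dest: inj_onD)
  qed
  then have "0 < V x \<and> V x < 1 \<and> Vinv (V x) = x"
    unfolding V_def Vinv_def by (rule theI')
  then show "0 < V x" "V x < 1" "Vinv (V x) = x" by auto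
qed

lemma V_Vinv:
  assumes "0 < v" "v < 1"
  shows "V (Vinv v) = v"
proof -
  have "0 < Vinv v" using assms by (simp add: Vinv_def)
  from V_spec[OF this] assms show ?thesis
    using strict_mono_on_imp_inj_on[OF strict_mono_on_Vinv] by (auto dest: inj_onD)
qed

lemma V_strict_mono:
  assumes "0 < x" "x < y"
  shows "V x < V y"
  using V_spec[of x] V_spec[of y] assms strict_mono_on_less[OF strict_mono_on_Vinv, of "V x" "V y"]
  by auto

lemma V_le_self:
  assumes "0 < x"
  shows "V x \<le> x"
proof -
  have "V x * 1 \<le> V x * exp (V x / (1 - V x))"
    using V_spec[OF assms] by (intro mult_left_mono) auto
  then show ?thesis using V_spec(3)[OF assms] by (simp add: Vinv_def)
qed

lemma V_has_real_derivative:
  assumes "0 < x"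
  shows "(V has_real_derivative V x * (1 - V x)^2 / (x * (1 - V x + V x ^ 2))) (at x)"
proof -
  define v where "v = V x"
  have v: "0 < v" "v < 1" "v * exp (v / (1 - v)) = x"
    using V_spec[OF assms] unfolding v_def Vinv_def by auto
  have "isCont V (Vinv v)"
    by (rule isCont_inverse_function2[where a = "v / 2" and b = "(1 + v) / 2"])
      (use v in \<open>auto intro!: V_Vinv DERIV_isCont[OF Vinv_has_real_derivative]\<close>)
  then have cont: "isCont V x" using V_spec(3)[OF assms] by (simp add: v_def)
  have pos: "0 < 1 + v / (1 - v)^2" using v by (simp add: add_pos_nonneg)
  have "(V has_real_derivative inverse (exp (v / (1 - v)) * (1 + v / (1 - v)^2))) (at x)"
    by (rule DERIV_inverse_function[where f = Vinv and a = 0 and b = "x + 1"])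
      (use v assms cont pos in \<open>auto simp: v_def intro!: Vinv_has_real_derivative V_spec(3)\<close>)
  moreover have "inverse (exp (v / (1 - v)) * (1 + v / (1 - v)^2)) = v * (1 - v)^2 / (x * (1 - v + v^2))"
  proof -
    have "1 + v / (1 - v)^2 = ((1 - v)^2 + v) / (1 - v)^2"
      using v by (simp add: field_simps)
    also have "(1 - v)^2 + v = 1 - v + v^2"
      by (simp add: power2_eq_square algebra_simps)
    finally have "1 + v / (1 - v)^2 = (1 - v + v^2) / (1 - v)^2" .
    then show ?thesis
      using v pos by (simp flip: v(3))
  qed
  ultimately show ?thesis by (simp add: v_def)
qed

definition h_fun :: "real \<Rightarrow> real" where
  "h_fun y = y * (1 + y) / (1 - y + y^2)"

definition w_fun :: "real \<Rightarrow> real" where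
  "w_fun v = v / (1 - v + v^2)"

lemma quadratic_pos: "0 < 1 - y + (y::real)^2"
proof -
  have "1 - y + y^2 = (y - 1/2)^2 + 3/4" by (simp add: power2_eq_square field_simps)
  moreover have "0 \<le> (y - 1/2)^2" by simp
  ultimately show ?thesis by linarith
qed

lemma one_minus_w_fun: "1 - w_fun v = (1 - v)^2 / (1 - v + v^2)"
  using quadratic_pos[of v] by (simp add: w_fun_def field_simps power2_eq_square)

lemma h_fun_le_double:
  assumes "0 \<le> y" "y \<le> 1/2"
  shows "h_fun y \<le> 2 * y"
proof -
  have "0 \<le> y * ((1 - 2 * y) * (1 - y))" using assms by simp
  then have "y * (1 + y) \<le> 2 * y * (1 - y + y^2)" by (simp add: algebra_simps power2_eq_square)
  then show ?thesis unfolding h_fun_def using quadratic_pos[of y] by (simp add: divide_simps)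
qed

lemma h_fun_le_linear:
  assumes "0 < a" "a \<le> b" "b \<le> 1/2"
  shows "h_fun a \<le> a * ((1 + b) / (1 - b + b^2))"
proof -
  have "a * b \<le> (1/2) * (1/2)" using assms by (intro mult_mono) auto
  then have "0 \<le> (b - a) * (2 - a - b - a * b)" using assms by (intro mult_nonneg_nonneg) auto
  then have "(1 + a) * (1 - b + b^2) \<le> (1 + b) * (1 - a + a^2)"
    by (simp add: algebra_simps power2_eq_square)
  then have "(1 + a) / (1 - a + a^2) \<le> (1 + b) / (1 - b + b^2)"
    using quadratic_pos[of a] quadratic_pos[of b] by (simp add: divide_simps)
  then have "a * ((1 + a) / (1 - a + a^2)) \<le> a * ((1 + b) / (1 - b + b^2))"
    using assms by (intro mult_left_mono) auto
  then show ?thesis unfolding h_fun_def by simp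
qed

lemma h_fun_strict_mono:
  assumes "0 \<le> a" "a < b" "b \<le> 1"
  shows "h_fun a < h_fun b"
proof -
  have "a * b \<le> a" "a * b \<le> b"
    using assms mult_left_mono[of b 1 a] mult_right_mono[of a 1 b] by auto
  then have "0 < (b - a) * (1 + a + b - 2 * a * b)" using assms by (intro mult_pos_pos) auto
  then have "(a + a^2) * (1 - b + b^2) < (b + b^2) * (1 - a + a^2)"
    by (simp add: algebra_simps power2_eq_square)
  then show ?thesis unfolding h_fun_def using quadratic_pos[of a] quadratic_pos[of b]
    by (simp add: divide_simps algebra_simps power2_eq_square)
qed

lemma h_fun_reflect: "h_fun y + h_fun (1 - y) = 2"
proof -
  have "1 - (1 - y) + (1 - y)^2 = 1 - y + y^2" by (simp add: power2_eq_square algebra_simps)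
  then have "h_fun y + h_fun (1 - y) = (y * (1 + y) + (1 - y) * (1 + (1 - y))) / (1 - y + y^2)"
    unfolding h_fun_def by (simp add: add_divide_distrib)
  also have "y * (1 + y) + (1 - y) * (1 + (1 - y)) = 2 * (1 - y + y^2)"
    by (simp add: algebra_simps power2_eq_square)
  also have "2 * (1 - y + y^2) / (1 - y + y^2) = 2"
    using quadratic_pos[of y] by (intro nonzero_mult_div_cancel_right) simp
  finally show ?thesis .
qed

(* At most one y_j exceeds 1/2; the others have sum r < 1 - y_j, and since h(y)/y increases
   their contribution is at most h(r) < h(1 - y_j) = 2 - h(y_j). *)
lemma sum_h_fun_less_2:
  fixes y :: "'a \<Rightarrow> real"
  assumes "finite S" "\<And>i. i \<in> S \<Longrightarrow> 0 < y i" "(\<Sum>i\<in>S. y i) < 1"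
  shows "(\<Sum>i\<in>S. h_fun (y i)) < 2"
proof (cases "\<forall>i\<in>S. y i \<le> 1/2")
  case True
  have "(\<Sum>i\<in>S. h_fun (y i)) \<le> (\<Sum>i\<in>S. 2 * y i)"
    using True assms(2) by (intro sum_mono h_fun_le_double) (auto simp: less_imp_le)
  also have "\<dots> < 2" using assms(3) by (simp add: sum_distrib_left[symmetric])
  finally show ?thesis .
next
  case False
  then obtain j where j: "j \<in> S" "1/2 < y j" by auto
  define R where "R = S - {j}"
  define r where "r = (\<Sum>i\<in>R. y i)"
  have split: "(\<Sum>i\<in>S. f i) = f j + (\<Sum>i\<in>R. f i)" for f :: "'a \<Rightarrow> real"
    unfolding R_def using j assms(1) by (simp add: sum.remove)
  have r: "0 \<le> r" "r < 1 - y j"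
    using split[of y] assms unfolding r_def R_def by (auto intro: sum_nonneg less_imp_le)
  have "y i \<le> r" if "i \<in> R" for i
    unfolding r_def using that assms by (intro member_le_sum) (auto simp: R_def less_imp_le)
  then have "(\<Sum>i\<in>R. h_fun (y i)) \<le> (\<Sum>i\<in>R. y i * ((1 + r) / (1 - r + r^2)))"
    using r j assms(2) by (intro sum_mono h_fun_le_linear) (auto simp: R_def)
  also have "\<dots> = r * ((1 + r) / (1 - r + r^2))" unfolding r_def by (rule sum_distrib_right[symmetric])
  also have "\<dots> = h_fun r" unfolding h_fun_def by simp
  also have "\<dots> < h_fun (1 - y j)" using r j by (intro h_fun_strict_mono) auto
  finally show ?thesis using split[of "\<lambda>i. h_fun (y i)"] h_fun_reflect[of "y j"] by simp
qed

lemma w_fun_le_h_fun: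
  assumes "0 < y" "y < 1" "0 < T" "T \<le> 1"
  shows "w_fun (T * y) * (1 + T * y / T^2) \<le> (1 + T) / (2 * T) * h_fun y"
proof -
  define P where "P = 1 - T * y + (T * y)^2"
  define Q where "Q = 1 - y + y^2"
  have P: "P > 0" unfolding P_def by (rule quadratic_pos)
  have Q: "Q > 0" unfolding Q_def by (rule quadratic_pos)
  have lhs: "w_fun (T * y) * (1 + T * y / T^2) = y * (T + y) / P"
    unfolding w_fun_def P_def[symmetric] using assms P by (simp add: field_simps power2_eq_square)
  have rhs: "(1 + T) / (2 * T) * h_fun y = (1 + T) * y * (1 + y) / (2 * T * Q)"
    unfolding h_fun_def Q_def[symmetric] using assms Q by (simp add: field_simps)
  define e where "e = (1 - T) * (1 + y) + T * (3 - 3 * y^3) + T * (1 - T) * (y^2 + y^3)"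
  have "0 \<le> e" unfolding e_def using assms
    by (intro add_nonneg_nonneg mult_nonneg_nonneg) (auto simp: power_le_one)
  moreover have "(1 + T) * (1 + y) * P - 2 * T * (T + y) * Q = (1 - T) * e"
    unfolding P_def Q_def e_def by (simp add: algebra_simps power2_eq_square power3_eq_cube)
  ultimately have "2 * T * (T + y) * Q \<le> (1 + T) * (1 + y) * P"
    using assms by (smt (verit) mult_nonneg_nonneg)
  then have "y * (2 * T * (T + y) * Q) \<le> y * ((1 + T) * (1 + y) * P)"
    using assms by (simp add: mult_left_mono)
  then have "y * (T + y) / P \<le> (1 + T) * y * (1 + y) / (2 * T * Q)"
    using P Q assms by (simp add: divide_simps algebra_simps)
  then show ?thesis using lhs rhs by simp
qed

lemma sum_w_fun_less:
  fixes v :: "'a \<Rightarrow> real"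
  assumes "finite S" "\<And>i. i \<in> S \<Longrightarrow> 0 < v i" "0 < q"
    and T: "T = q + (\<Sum>i\<in>S. v i)" "T \<le> 1"
  shows "(\<Sum>i\<in>S. w_fun (v i) * (1 + v i / T^2)) < 1 + 1 / T"
proof -
  have "0 \<le> (\<Sum>i\<in>S. v i)" using assms by (intro sum_nonneg) (simp add: less_imp_le)
  then have T0: "0 < T" using assms by simp
  have vT: "v i < T" if "i \<in> S" for i
    using member_le_sum[of i S v] that assms by (auto simp: less_imp_le)
  have "(\<Sum>i\<in>S. w_fun (v i) * (1 + v i / T^2)) \<le> (\<Sum>i\<in>S. (1 + T) / (2 * T) * h_fun (v i / T))"
  proof (rule sum_mono)
    fix i assume "i \<in> S"
    then show "w_fun (v i) * (1 + v i / T^2) \<le> (1 + T) / (2 * T) * h_fun (v i / T)"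
      using w_fun_le_h_fun[of "v i / T" T] assms vT T0 by simp
  qed
  also have "\<dots> = (1 + T) / (2 * T) * (\<Sum>i\<in>S. h_fun (v i / T))" by (simp add: sum_distrib_left)
  also have "\<dots> < (1 + T) / (2 * T) * 2"
  proof (rule mult_strict_left_mono)
    have "(\<Sum>i\<in>S. v i / T) < 1" using T0 assms by (simp add: sum_divide_distrib[symmetric])
    then show "(\<Sum>i\<in>S. h_fun (v i / T)) < 2" using assms T0 by (intro sum_h_fun_less_2) auto
  qed (use T0 in simp)
  also have "\<dots> = 1 + 1 / T" using T0 by (simp add: field_simps)
  finally show ?thesis .
qed

lemma vq_bounds:
  assumes "0 < q"
  shows "0 < vq \<theta> i q" "vq \<theta> i q < 1"
  using V_spec[of "q * exp (\<theta> i - 1)"] assms by (auto simp: vq_def)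

lemma vq_has_real_derivative:
  assumes "0 < q"
  shows "(vq \<theta> i has_real_derivative vq \<theta> i q * (1 - w_fun (vq \<theta> i q)) / q) (at q)"
proof -
  define c where "c = exp (\<theta> i - 1)"
  define v where "v = vq \<theta> i q"
  have "0 < c" by (simp add: c_def)
  have "((\<lambda>x. V (x * c)) has_real_derivative
      v * (1 - v)^2 / (q * c * (1 - v + v^2)) * c) (at q)"
    unfolding v_def vq_def c_def
    by (rule DERIV_chain2[OF V_has_real_derivative]) (use assms in \<open>auto intro!: derivative_eq_intros\<close>)
  moreover have "v * (1 - v)^2 / (q * c * (1 - v + v^2)) * c = v * (1 - w_fun v) / q"
    using \<open>0 < c\<close> by (simp add: one_minus_w_fun)
  ultimately show ?thesis unfolding v_def c_def vq_def[abs_def] by simp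
qed

definition mass :: "(nat \<Rightarrow> real) \<Rightarrow> nat set \<Rightarrow> real \<Rightarrow> real" where
  "mass \<theta> S q = q + (\<Sum>i\<in>S. vq \<theta> i q)"

lemma mass_has_real_derivative:
  assumes "0 < q"
  shows "(mass \<theta> S has_real_derivative 1 + (\<Sum>i\<in>S. vq \<theta> i q * (1 - w_fun (vq \<theta> i q)) / q)) (at q)"
  unfolding mass_def[abs_def] by (intro derivative_intros vq_has_real_derivative assms)

lemma strict_mono_on_mass:
  assumes "finite S"
  shows "strict_mono_on {0<..} (mass \<theta> S)"
proof (rule strict_mono_onI)
  fix a b :: real assume "a \<in> {0<..}" "b \<in> {0<..}" "a < b"
  then have "(\<Sum>i\<in>S. vq \<theta> i a) \<le> (\<Sum>i\<in>S. vq \<theta> i b)"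
    unfolding vq_def by (intro sum_mono less_imp_le V_strict_mono) auto
  with \<open>a < b\<close> show "mass \<theta> S a < mass \<theta> S b" by (simp add: mass_def)
qed

lemma qbar0_root:
  assumes "finite S" "S \<noteq> {}"
  shows "0 < qbar0 \<theta> S" "qbar0 \<theta> S < 1" "mass \<theta> S (qbar0 \<theta> S) = 1"
proof -
  define q0 where "q0 = 1 / (2 + (\<Sum>i\<in>S. exp (\<theta> i - 1)))"
  have exp_sum: "0 \<le> (\<Sum>i\<in>S. exp (\<theta> i - 1))" by (intro sum_nonneg) simp
  then have q0: "0 < q0" "q0 < 1" by (auto simp: q0_def)
  have "mass \<theta> S q0 \<le> q0 * (1 + (\<Sum>i\<in>S. exp (\<theta> i - 1)))"
    using sum_mono[of S "\<lambda>i. vq \<theta> i q0" "\<lambda>i. q0 * exp (\<theta> i - 1)"] V_le_self q0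
    by (simp add: mass_def vq_def sum_distrib_left algebra_simps)
  also have "\<dots> < 1" using exp_sum by (simp add: q0_def field_simps)
  finally have "mass \<theta> S q0 < 1" .
  moreover have "1 < mass \<theta> S 1"
    using assms vq_bounds[of 1] by (simp add: mass_def sum_pos)
  moreover have "continuous_on {q0..1} (mass \<theta> S)"
    using q0 by (intro continuous_at_imp_continuous_on ballI DERIV_isCont[OF mass_has_real_derivative]) auto
  ultimately have "\<exists>q1. q0 \<le> q1 \<and> q1 \<le> 1 \<and> mass \<theta> S q1 = 1"
    using q0 by (intro IVT') auto
  then obtain q1 where q1: "q0 \<le> q1" "q1 \<le> 1" "mass \<theta> S q1 = 1" by blast
  with q0 \<open>1 < mass \<theta> S 1\<close> have q1_bounds: "0 < q1" "q1 < 1" by (auto simp: le_less)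
  have root_iff: "0 < q \<and> q < 1 \<and> (\<Sum>i\<in>S. V (q * exp (\<theta> i - 1))) = 1 - q
      \<longleftrightarrow> 0 < q \<and> q < 1 \<and> mass \<theta> S q = 1" for q
    by (auto simp: mass_def vq_def)
  have "qbar0 \<theta> S = q1"
    unfolding qbar0_def if_not_P[OF assms(2)] root_iff
  proof (rule the_equality)
    show "0 < q1 \<and> q1 < 1 \<and> mass \<theta> S q1 = 1" using q1 q1_bounds by blast
    show "q = q1" if "0 < q \<and> q < 1 \<and> mass \<theta> S q = 1" for q
      using that q1 q1_bounds strict_mono_on_imp_inj_on[OF strict_mono_on_mass[OF assms(1)]]
      by (metis greaterThan_iff inj_onD)
  qed
  with q1 q1_bounds show "0 < qbar0 \<theta> S" "qbar0 \<theta> S < 1" "mass \<theta> S (qbar0 \<theta> S) = 1"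
    by simp_all
qed

lemma mass_le_one:
  assumes "finite S" "0 < q" "q \<le> qbar0 \<theta> S"
  shows "mass \<theta> S q \<le> 1"
proof (cases "S = {}")
  case True
  then show ?thesis using assms by (simp add: mass_def qbar0_def)
next
  case False
  show ?thesis
    using qbar0_root[OF assms(1) False] assms
      strict_mono_on_less_eq[OF strict_mono_on_mass[OF assms(1)], of q "qbar0 \<theta> S" \<theta>]
    by auto
qed

lemma F_has_real_derivative:
  assumes "finite S" "0 < q"
  shows "(F \<theta> S has_real_derivative
           ((\<Sum>i\<in>S. w_fun (vq \<theta> i q) * (1 + vq \<theta> i q / (mass \<theta> S q)^2)) - 1 - 1 / mass \<theta> S q) / q)
         (at q)"
proof -
  define v where "v i = vq \<theta> i q" for i
  define T where "T = mass \<theta> S q"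
  define T' where "T' = 1 + (\<Sum>i\<in>S. v i * (1 - w_fun (v i)) / q)"
  define W where "W = (\<Sum>i\<in>S. w_fun (v i))"
  define X where "X = (\<Sum>i\<in>S. v i * w_fun (v i))"
  have v: "0 < v i" "v i < 1" for i using vq_bounds[OF assms(2)] by (auto simp: v_def)
  have T: "T = q + (\<Sum>i\<in>S. v i)" by (simp add: T_def mass_def v_def)
  have "0 \<le> (\<Sum>i\<in>S. v i)" using v by (intro sum_nonneg) (simp add: less_imp_le)
  then have "0 < T" using T assms(2) by simp
  have frac: "((\<lambda>x. vq \<theta> i x / (1 - vq \<theta> i x)) has_real_derivative w_fun (v i) / q) (at q)" for i
  proof -
    define a where "a = v i * (1 - w_fun (v i)) / q"
    have "((\<lambda>x. vq \<theta> i x / (1 - vq \<theta> i x)) has_real_derivative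
           (a * (1 - v i) - v i * (0 - a)) / ((1 - v i) * (1 - v i))) (at q)"
      unfolding a_def v_def
      by (intro DERIV_divide DERIV_diff DERIV_const vq_has_real_derivative assms(2))
        (use vq_bounds[OF assms(2), of \<theta> i] in simp)
    moreover have "(a * (1 - v i) - v i * (0 - a)) / ((1 - v i) * (1 - v i)) = a / (1 - v i)^2"
      by (simp add: algebra_simps power2_eq_square)
    moreover have "a / (1 - v i)^2 = w_fun (v i) / q"
      using v[of i] unfolding a_def one_minus_w_fun by (simp add: w_fun_def)
    ultimately show ?thesis by simp
  qed
  have mass': "(mass \<theta> S has_real_derivative T') (at q)"
    unfolding T'_def v_def by (rule mass_has_real_derivative[OF assms(2)])
  have "((\<lambda>x. (1 - mass \<theta> S x) / mass \<theta> S x) has_real_derivative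
      ((0 - T') * T - (1 - T) * T') / (T * T)) (at q)"
    unfolding T_def using \<open>0 < T\<close> by (intro DERIV_divide DERIV_diff DERIV_const mass') (simp add: T_def)
  moreover have "((\<lambda>x. - ln x + (\<Sum>i\<in>S. vq \<theta> i x / (1 - vq \<theta> i x))) has_real_derivative
      - (1 / q) + W / q) (at q)"
    unfolding W_def sum_divide_distrib
    by (intro DERIV_add DERIV_minus DERIV_ln_divide DERIV_sum frac assms(2))
  ultimately have "(F \<theta> S has_real_derivative - (1 / q) + W / q + ((0 - T') * T - (1 - T) * T') / (T * T)) (at q)"
    unfolding F_def[abs_def] mass_def diff_diff_eq by (rule DERIV_add[rotated])
  moreover have "- (1 / q) + W / q + ((0 - T') * T - (1 - T) * T') / (T * T) = (W + X / T^2 - 1 - 1 / T) / q"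
  proof -
    have "(\<Sum>i\<in>S. v i * (1 - w_fun (v i)) / q) = ((\<Sum>i\<in>S. v i) - X) / q"
      unfolding X_def sum_subtractf[symmetric] sum_divide_distrib by (simp add: right_diff_distrib)
    then have T'_eq: "T' = (T - X) / q" using assms(2) by (simp add: T'_def T field_simps)
    show ?thesis unfolding T'_eq using \<open>0 < T\<close> assms(2) by (simp add: field_simps power2_eq_square)
  qed
  moreover have "W + X / T^2 = (\<Sum>i\<in>S. w_fun (v i) * (1 + v i / T^2))"
    by (simp add: W_def X_def algebra_simps sum.distrib sum_divide_distrib)
  ultimately show ?thesis by (simp add: v_def T_def)
qed

lemma F_has_negative_derivative:
  assumes "finite S" "0 < q" "mass \<theta> S q \<le> 1"
  shows "\<exists>D. (F \<theta> S has_real_derivative D) (at q) \<and> D < 0"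
proof (intro exI conjI)
  show "(F \<theta> S has_real_derivative
          ((\<Sum>i\<in>S. w_fun (vq \<theta> i q) * (1 + vq \<theta> i q / (mass \<theta> S q)^2)) - 1 - 1 / mass \<theta> S q) / q)
        (at q)"
    by (rule F_has_real_derivative[OF assms(1,2)])
  have "(\<Sum>i\<in>S. w_fun (vq \<theta> i q) * (1 + vq \<theta> i q / (mass \<theta> S q)^2)) < 1 + 1 / mass \<theta> S q"
    using vq_bounds(1)[OF assms(2)] assms by (intro sum_w_fun_less) (auto simp: mass_def)
  then show "((\<Sum>i\<in>S. w_fun (vq \<theta> i q) * (1 + vq \<theta> i q / (mass \<theta> S q)^2)) - 1 - 1 / mass \<theta> S q) / q < 0"
    using assms(2) by (simp add: divide_neg_pos)
qed

theorem lemma3: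
  fixes n :: nat and \<theta> :: "nat \<Rightarrow> real" and S :: "nat set"
  assumes "\<And>i. i \<in> {1..n} \<Longrightarrow> \<theta> i \<ge> 0"
    and "S \<subset> {1..n}"
  shows "strict_antimono_on {0<..qbar0 \<theta> S} (F \<theta> S)"
proof (rule monotone_onI)
  have "finite S" using assms(2) by (meson finite_atLeastAtMost finite_subset psubset_imp_subset)
  fix x y assume x: "x \<in> {0<..qbar0 \<theta> S}" and y: "y \<in> {0<..qbar0 \<theta> S}" and "x < y"
  show "F \<theta> S y < F \<theta> S x"
  proof (rule DERIV_neg_imp_decreasing[OF \<open>x < y\<close>])
    fix q assume "x \<le> q" "q \<le> y"
    with x y have "0 < q" "q \<le> qbar0 \<theta> S" by auto
    then show "\<exists>D. (F \<theta> S has_real_derivative D) (at q) \<and> D < 0"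
      using \<open>finite S\<close> by (intro F_has_negative_derivative mass_le_one)
  qed
qed

end
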